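(* Let $q$ be a prime power, $n\ge2$, and $s$ an odd positive integer with $\gcd(s,n)=1$. If $n$ and $d$ have opposite parity and $1\le d\le n-1$, then the code $$\mathcal{H}_{n,d,s}=\Big\{\sum_{j=1}^{\frac{n-d+1}{2}}\Big((b_jx)^{q^{2s(n-j+1)}}+b_j^{q^s}x^{q^{2sj}}\Big): b_1,\dots,b_{\frac{n-d+1}{2}}\in\mathbb{F}_{q^{2n}}\Big\}$$ is an $(n-d+1)$-design. If $n$ and $d$ are both odd with $1\le d\le n-1$, then the code $$\mathcal{E}_{n,d,s}=\Big\{(b_0x)^{q^{s(n+1)}}+\sum_{j=1}^{\frac{n-d}{2}}\Big((b_jx)^{q^{s(n+2j+1)}}+b_j^{q^s}x^{q^{s(n-2j+1)}}\Big): b_0\in\mathbb{F}_{q^n},\ b_1,\dots,b_{\frac{n-d}{2}}\in\mathbb{F}_{q^{2n}}\Big\}$$ is an $(n-d+1)$-design.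
   Context: Polynomials are $\mathbb{F}_{q^2}$-linearized polynomials over $\mathbb{F}_{q^{2n}}$ taken modulo $x^{q^{2n}}-x$, i.e. elements of $\mathcal{L}_{n,q^2}=\{\sum_{i=0}^{n-1}a_ix^{q^{2i}}:a_i\in\mathbb{F}_{q^{2n}}\}$, viewed as $\mathbb{F}_{q^2}$-linear maps $\mathbb{F}_{q^{2n}}\to\mathbb{F}_{q^{2n}}$; the rank of $f$ is $\dim_{\mathbb{F}_{q^2}}$ of its image. The paper models Hermitian forms of order $n$ over $\mathbb{F}_{q^2}$ by the set $\mathcal{H}_n(q^2)=\{\sum_{i=0}^{n-1}c_ix^{q^{2i}}: c_{n-i+1}=c_i^{q^{2n-2i+1}},\ i\in\{0,\dots,n-1\}\}$ (indices modulo $n$), which is $\mathbb{F}_q$-linearly and rank-preservingly identified with the set $\mathrm{H}_n(q^2)$ of Hermitian $n\times n$ matrices over $\mathbb{F}_{q^2}$. On $\mathcal{H}_n(q^2)$ the pairing is $b(f,g)=\mathrm{Tr}_{q^{2n}/q^2}\big(\sum_{i=0}^{n-1}a_ib_i\big)$ for $f=\sum a_ix^{q^{2i}}$, $g=\sum b_ix^{q^{2i}}$, where $\mathrm{Tr}_{q^{2n}/q^2}(x)=\sum_{i=0}^{n-1}x^{q^{2i}}$; the dual of an additive code $\mathcal{C}$ is $\mathcal{C}^\perp=\{f\in\mathcal{H}_n(q^2): b(f,g)=0\ \forall g\in\mathcal{C}\}$. An additive code $\mathcal{C}$ is a $t$-design if its dual $\mathcal{C}^\perp$ contains no nonzero element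 of rank in $\{1,\dots,t\}$ (equivalently, in the matrix model, the dual inner distribution satisfies $A'_1=\dots=A'_t=0$). The codes $\mathcal{H}_{n,d,s}$ and $\mathcal{E}_{n,d,s}$ are known (Schmidt) to be maximum $\mathbb{F}_q$-linear Hermitian $d$-codes, i.e. of size $q^{n(n-d+1)}$ with all nonzero elements of rank at least $d$. *)

theory Defs
  imports "HOL-Computational_Algebra.Primes"
begin

(* The field F_{q^{2n}} is an abstract finite field type 'a with CARD('a) = q^(2n).
   A linearized polynomial  sum_{i<n} a_i x^(q^(2i))  is represented by its coefficient
   vector a :: nat => 'a (with a i = 0 for i >= n); its associated map is lin_eval. *)

definition prime_power :: "nat \<Rightarrow> bool" where
  "prime_power q \<longleftrightarrow> (\<exists>p k. prime p \<and> k \<ge> 1 \<and> q = p ^ k)"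

definition lin_eval :: "nat \<Rightarrow> nat \<Rightarrow> (nat \<Rightarrow> 'a::field) \<Rightarrow> 'a \<Rightarrow> 'a" where
  "lin_eval q n a = (\<lambda>x. \<Sum>i<n. a i * x ^ (q ^ (2 * i)))"

definition coeff_vecs :: "nat \<Rightarrow> (nat \<Rightarrow> 'a::field) set" where
  "coeff_vecs n = {a. \<forall>i\<ge>n. a i = 0}"

definition lin_coeffs :: "nat \<Rightarrow> nat \<Rightarrow> ('a::field \<Rightarrow> 'a) \<Rightarrow> (nat \<Rightarrow> 'a)" where
  "lin_coeffs q n f = (THE a. a \<in> coeff_vecs n \<and> f = lin_eval q n a)"

definition herm_set :: "nat \<Rightarrow> nat \<Rightarrow> (nat \<Rightarrow> 'a::field) set" where
  "herm_set q n = {c \<in> coeff_vecs n.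
      \<forall>i<n. c ((n - i + 1) mod n) = c i ^ (q ^ (2 * n - 2 * i + 1))}"

definition rel_trace :: "nat \<Rightarrow> nat \<Rightarrow> 'a::field \<Rightarrow> 'a" where
  "rel_trace q n x = (\<Sum>i<n. x ^ (q ^ (2 * i)))"

definition pairing :: "nat \<Rightarrow> nat \<Rightarrow> (nat \<Rightarrow> 'a::field) \<Rightarrow> (nat \<Rightarrow> 'a) \<Rightarrow> 'a" where
  "pairing q n a b = rel_trace q n (\<Sum>i<n. a i * b i)"

definition dual_code :: "nat \<Rightarrow> nat \<Rightarrow> ('a::field \<Rightarrow> 'a) set \<Rightarrow> (nat \<Rightarrow> 'a) set" where
  "dual_code q n C = {f \<in> herm_set q n. \<forall>g\<in>C. pairing q n f (lin_coeffs q n g) = 0}"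

definition subfield_q2 :: "nat \<Rightarrow> 'a::field set" where
  "subfield_q2 q = {x. x ^ (q ^ 2) = x}"

definition span_q2 :: "nat \<Rightarrow> 'a::field set \<Rightarrow> 'a set" where
  "span_q2 q S = {\<Sum>s\<in>S. c s * s | c. \<forall>s\<in>S. c s \<in> subfield_q2 q}"

definition dim_q2 :: "nat \<Rightarrow> 'a::field set \<Rightarrow> nat" where
  "dim_q2 q V = (LEAST k. \<exists>S. finite S \<and> card S = k \<and> S \<subseteq> V \<and> V \<subseteq> span_q2 q S)"

definition lin_rank :: "nat \<Rightarrow> nat \<Rightarrow> (nat \<Rightarrow> 'a::field) \<Rightarrow> nat" where
  "lin_rank q n a = dim_q2 q (range (lin_eval q n a))"

definition is_design :: "nat \<Rightarrow> nat \<Rightarrow> ('a::field \<Rightarrow> 'a) set \<Rightarrow> nat \<Rightarrow> bool" where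
  "is_design q n C t \<longleftrightarrow>
     (\<forall>f\<in>dual_code q n C. f \<noteq> (\<lambda>_. 0) \<longrightarrow> lin_rank q n f \<notin> {1..t})"

definition H_code :: "nat \<Rightarrow> nat \<Rightarrow> nat \<Rightarrow> nat \<Rightarrow> ('a::field \<Rightarrow> 'a) set" where
  "H_code q n d s = {(\<lambda>x. \<Sum>j\<in>{1..(n - d + 1) div 2}.
       (b j * x) ^ (q ^ (2 * s * (n - j + 1))) + b j ^ (q ^ s) * x ^ (q ^ (2 * s * j))) | b. True}"

(* b0 ranges over F_{q^n} = {y. y^(q^n) = y} *)
definition E_code :: "nat \<Rightarrow> nat \<Rightarrow> nat \<Rightarrow> nat \<Rightarrow> ('a::field \<Rightarrow> 'a) set" where
  "E_code q n d s = {(\<lambda>x. (b0 * x) ^ (q ^ (s * (n + 1))) + (\<Sum>j\<in>{1..(n - d) div 2}.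
       (b j * x) ^ (q ^ (s * (n + 2 * j + 1))) + b j ^ (q ^ s) * x ^ (q ^ (s * (n - 2 * j + 1)))))
     | b0 b. b0 ^ (q ^ n) = b0}"

end

(* Write \<sigma> for y \<mapsto> y^(q^(2s)). As gcd(s, n) = 1, \<sigma> generates Gal(F_{q^{2n}}/F_{q^2}), so its
   fixed field is F_{q^2} and a \<sigma>-polynomial \<Sum>_{l \<le> k} c_l y^(\<sigma>^l) with c_k \<noteq> 0 has at most
   q^(2k) roots (induction on k, factoring through y \<mapsto> \<sigma>(y) - y).
   Pairing an element f of the dual code with the code words having a single nonzero b_j gives
   Tr(c \<beta>^(q^u) + c' \<beta>^(q^v)) = 0 for all \<beta>, with u even and v odd, where c, c' are two
   coefficients of f; the 2n Frobenius exponents of this trace are distinct, so c = c' = 0.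
   For H_{n,d,s} and E_{n,d,s} this kills the coefficients of f at the indices s t mod n for n - d + 1
   consecutive t, so f = P(x^(q^(2sw))) for a \<sigma>-polynomial P of \<sigma>-degree at most d - 2. The kernel
   of f then has at most q^(2(d-2)) elements, and the rank of f is at least n - d + 2. *)

theory Submission
  imports Defs "HOL-Computational_Algebra.Polynomial" "HOL-Number_Theory.Cong" "HOL-Library.FuncSet"
begin

lemma field_power_card_eq_same:
  fixes x :: "'a::{field,finite}"
  shows "x ^ card (UNIV :: 'a set) = x"
proof (cases "x = 0")
  case False
  let ?U = "UNIV - {0::'a}"
  have card_U: "card ?U = card (UNIV :: 'a set) - 1" by (simp add: card_Diff_singleton)
  have "(\<Prod>y\<in>?U. x * y) = (\<Prod>y\<in>?U. y)"
    by (rule prod.reindex_bij_witness[of _ "\<lambda>y. y / x" "\<lambda>y. x * y"]) (use False in auto)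
  hence "x ^ card ?U * \<Prod>?U = 1 * \<Prod>?U" by (simp add: prod.distrib)
  hence "x ^ (card (UNIV :: 'a set) - 1) = 1" by (simp add: card_U)
  hence "x * x ^ (card (UNIV :: 'a set) - 1) = x" by simp
  thus ?thesis using finite_UNIV_card_ge_0[where ?'a = 'a] by (simp flip: power_Suc)
qed (use finite_UNIV_card_ge_0[where ?'a = 'a] in auto)

lemma card_fixed_points_power_le:
  assumes "1 < N"
  shows "card {x::'a::idom. x ^ N = x} \<le> N"
proof -
  define p :: "'a poly" where "p = monom 1 N - monom 1 1"
  have "coeff p N = 1" using assms by (simp add: p_def)
  hence "p \<noteq> 0" by auto
  have "degree p \<le> N"
    unfolding p_def using assms by (intro degree_diff_le) (auto intro: order.trans[OF degree_monom_le])
  have "{x::'a. x ^ N = x} = {x. poly p x = 0}" by (simp add: p_def poly_monom)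
  also have "card \<dots> \<le> degree p" using \<open>p \<noteq> 0\<close> by (rule card_poly_roots_bound)
  finally show ?thesis using \<open>degree p \<le> N\<close> by simp
qed

lemma poly_eq_0_if_degree_less_card:
  fixes p :: "'a::{idom,finite} poly"
  assumes "degree p < card (UNIV :: 'a set)" and "\<And>x. poly p x = 0"
  shows "p = 0"
proof (rule ccontr)
  assume "p \<noteq> 0"
  hence "card {x. poly p x = 0} \<le> degree p" by (rule card_poly_roots_bound)
  thus False using assms by simp
qed

lemma card_fiber_le_card_kernel:
  fixes \<phi> :: "'a::ab_group_add \<Rightarrow> 'b::ab_group_add"
  assumes additive: "\<And>x y. \<phi> (x + y) = \<phi> x + \<phi> y"
  shows "card (\<phi> -` {z}) \<le> card (\<phi> -` {0})"
proof (cases "\<phi> -` {z} = {}")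
  case False
  then obtain x0 where x0: "\<phi> x0 = z" by auto
  have "(\<lambda>x. x - x0) ` (\<phi> -` {z}) = \<phi> -` {0}"
  proof (intro equalityI subsetI)
    fix y assume "y \<in> (\<lambda>x. x - x0) ` (\<phi> -` {z})"
    then obtain x where "\<phi> x = z" "y = x - x0" by auto
    thus "y \<in> \<phi> -` {0}" using additive[of y x0] x0 by simp
  next
    fix y assume "y \<in> \<phi> -` {0}"
    hence "\<phi> (y + x0) = z" using additive[of y x0] x0 by simp
    thus "y \<in> (\<lambda>x. x - x0) ` (\<phi> -` {z})" by (intro image_eqI[of _ _ "y + x0"]) auto
  qed
  moreover have "inj_on (\<lambda>x. x - x0) (\<phi> -` {z})" by (auto intro: inj_onI)
  ultimately have "card (\<phi> -` {0}) = card (\<phi> -` {z})" by (metis card_image)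
  thus ?thesis by simp
qed simp

lemma card_vimage_le:
  fixes \<phi> :: "'a::finite \<Rightarrow> 'b"
  assumes "finite Z" and "\<And>z. z \<in> Z \<Longrightarrow> card (\<phi> -` {z}) \<le> M"
  shows "card (\<phi> -` Z) \<le> card Z * M"
proof -
  have "\<phi> -` Z = (\<Union>z\<in>Z. \<phi> -` {z})" by auto
  hence "card (\<phi> -` Z) \<le> (\<Sum>z\<in>Z. card (\<phi> -` {z}))" using card_UN_le[OF assms(1)] by simp
  also have "\<dots> \<le> (\<Sum>z\<in>Z. M)" by (rule sum_mono) (rule assms(2))
  finally show ?thesis by simp
qed

lemma card_UNIV_le_kernel_image:
  fixes \<phi> :: "'a::{ab_group_add,finite} \<Rightarrow> 'b::ab_group_add"
  assumes "\<And>x y. \<phi> (x + y) = \<phi> x + \<phi> y"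
  shows "card (UNIV :: 'a set) \<le> card (\<phi> -` {0}) * card (range \<phi>)"
proof -
  have "card (\<phi> -` range \<phi>) \<le> card (range \<phi>) * card (\<phi> -` {0})"
    by (rule card_vimage_le) (auto intro: card_fiber_le_card_kernel assms)
  moreover have "\<phi> -` range \<phi> = UNIV" by blast
  ultimately show ?thesis by (simp add: mult.commute)
qed

lemma card_vimage_scale:
  fixes g :: "'a::field \<Rightarrow> 'b"
  assumes "u \<noteq> 0"
  shows "card ((\<lambda>y. g (u * y)) -` A) = card (g -` A)"
proof -
  have "inj (\<lambda>y. u * y)" using assms by (auto intro: injI)
  moreover have "x \<in> range (\<lambda>y. u * y)" for x using assms by (intro image_eqI[of _ _ "x / u"]) auto
  ultimately have "card ((\<lambda>y. u * y) -` (g -` A)) = card (g -` A)" by (intro card_vimage_inj) auto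
  moreover have "(\<lambda>y. u * y) -` (g -` A) = (\<lambda>y. g (u * y)) -` A" by auto
  ultimately show ?thesis by simp
qed

locale field_q2n =
  fixes q n :: nat and field_type :: "'a::{field,finite} itself"
  assumes prime_power_q: "prime_power q"
    and card_field: "card (UNIV :: 'a set) = q ^ (2 * n)"
begin

lemma q_ge_2: "2 \<le> q"
proof -
  obtain p k where p: "prime p" "1 \<le> k" "q = p ^ k"
    using prime_power_q unfolding prime_power_def by blast
  have "2 \<le> p" using p(1) by (rule prime_ge_2_nat)
  also have "p \<le> p ^ k" using p(2) \<open>2 \<le> p\<close> by (intro self_le_power) auto
  finally show ?thesis using p(3) by simp
qed

lemma one_less_q2: "1 < q ^ 2"
  using q_ge_2 by (intro one_less_power) auto

lemma n_pos: "0 < n"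
proof (rule ccontr)
  assume "\<not> 0 < n"
  hence "card (UNIV :: 'a set) = 1" by (simp add: card_field)
  moreover have "card {0, 1 :: 'a} \<le> card (UNIV :: 'a set)" by (rule card_mono) auto
  ultimately show False by simp
qed

lemma prime_CHAR: "prime CHAR('a)"
  using prime_CHAR_semidom finite_imp_CHAR_pos[OF finite_UNIV] by blast

lemma q_power_of_CHAR: "\<exists>k. q = CHAR('a) ^ k"
proof -
  obtain p k where p: "prime p" "q = p ^ k"
    using prime_power_q unfolding prime_power_def by blast
  have "(\<Sum>y\<in>UNIV. y + 1) = (\<Sum>y\<in>(UNIV :: 'a set). y)"
    by (rule sum.reindex_bij_witness[of _ "\<lambda>y. y - 1" "\<lambda>y. y + 1"]) auto
  hence "of_nat (card (UNIV :: 'a set)) = (0 :: 'a)" by (simp add: sum.distrib)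
  hence "CHAR('a) dvd card (UNIV :: 'a set)" by (simp only: of_nat_eq_0_iff_char_dvd)
  also have "card (UNIV :: 'a set) = p ^ (k * (2 * n))" by (simp add: card_field p(2) power_mult)
  finally have "CHAR('a) = p" using prime_CHAR p(1) by (metis prime_dvd_power primes_dvd_imp_eq)
  thus ?thesis using p by blast
qed

lemma frob_add: "(x + y :: 'a) ^ (q ^ e) = x ^ (q ^ e) + y ^ (q ^ e)"
proof -
  obtain k where "q = CHAR('a) ^ k" using q_power_of_CHAR by blast
  thus ?thesis by (intro freshmans_dream'[OF prime_CHAR, where n = "k * e"]) (simp add: power_mult)
qed

lemma frob_diff: "(x - y :: 'a) ^ (q ^ e) = x ^ (q ^ e) - y ^ (q ^ e)"
  using frob_add[of "x - y" y e] by simp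

lemma frob_zero [simp]: "(0 :: 'a) ^ (q ^ e) = 0"
  using q_ge_2 by simp

lemma inj_frob: "inj (\<lambda>x :: 'a. x ^ (q ^ e))"
proof (rule injI)
  fix x y :: 'a
  assume "x ^ (q ^ e) = y ^ (q ^ e)"
  hence "(x - y) ^ (q ^ e) = 0" by (simp add: frob_diff)
  thus "x = y" by simp
qed

lemma frob_frob: "((x :: 'a) ^ (q ^ a)) ^ (q ^ b) = x ^ (q ^ (a + b))"
  by (simp add: power_mult power_add)

lemma frob_period: "(x :: 'a) ^ (q ^ (2 * n * j)) = x"
proof (induction j)
  case (Suc j)
  have "x ^ (q ^ (2 * n * Suc j)) = (x ^ (q ^ (2 * n * j))) ^ (q ^ (2 * n))"
    by (simp add: frob_frob algebra_simps)
  thus ?case using Suc.IH field_power_card_eq_same[of x] by (simp add: card_field)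
qed simp

lemma frob_mod: "(x :: 'a) ^ (q ^ e) = x ^ (q ^ (e mod (2 * n)))"
proof -
  have "e = 2 * n * (e div (2 * n)) + e mod (2 * n)" by simp
  hence "x ^ (q ^ e) = (x ^ (q ^ (2 * n * (e div (2 * n))))) ^ (q ^ (e mod (2 * n)))"
    by (metis frob_frob)
  thus ?thesis by (simp only: frob_period)
qed

lemma frob_double_mod: "(x :: 'a) ^ (q ^ (2 * (m mod n))) = x ^ (q ^ (2 * m))"
proof -
  have "2 * (m mod n) = (2 * m) mod (2 * n)" by (rule mult_mod_right)
  thus ?thesis using frob_mod[of x "2 * m"] by (simp only:)
qed

lemma frob_poly_coeff_eq_0:
  assumes "finite I" and "inj_on \<pi> I" and "\<And>i. i \<in> I \<Longrightarrow> \<pi> i < 2 * n"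
    and vanish: "\<And>x :: 'a. (\<Sum>i\<in>I. c i * x ^ (q ^ \<pi> i)) = 0" and "i0 \<in> I"
  shows "c i0 = 0"
proof -
  define p where "p = (\<Sum>i\<in>I. monom (c i) (q ^ \<pi> i))"
  have "degree p < card (UNIV :: 'a set)"
    unfolding p_def card_field
  proof (rule degree_sum_less)
    fix i assume "i \<in> I"
    have "q ^ \<pi> i < q ^ (2 * n)" using assms(3)[OF \<open>i \<in> I\<close>] q_ge_2 by simp
    thus "degree (monom (c i) (q ^ \<pi> i)) < q ^ (2 * n)" using degree_monom_le le_less_trans by blast
  qed (use q_ge_2 in simp)
  moreover have "poly p x = 0" for x using vanish[of x] by (simp add: p_def poly_sum poly_monom)
  ultimately have "p = 0" by (rule poly_eq_0_if_degree_less_card)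
  have "coeff p (q ^ \<pi> i0) = (\<Sum>i\<in>I. if i = i0 then c i else 0)"
    unfolding p_def coeff_sum coeff_monom
    using assms(2,5) q_ge_2 by (intro sum.cong refl) (auto simp: inj_on_def)
  also have "\<dots> = c i0" using assms(1,5) by simp
  finally show ?thesis using \<open>p = 0\<close> by simp
qed

lemma lin_eval_add: "lin_eval q n a (x + y) = lin_eval q n a x + lin_eval q n a (y :: 'a)"
  by (simp add: lin_eval_def frob_add distrib_left sum.distrib)

lemma lin_eval_inj:
  assumes "a \<in> coeff_vecs n" and "b \<in> coeff_vecs n" and "lin_eval q n a = lin_eval q n (b :: nat \<Rightarrow> 'a)"
  shows "a = b"
proof
  fix i
  show "a i = b i"
  proof (cases "i < n")
    case True
    have "(\<Sum>i<n. (a i - b i) * x ^ (q ^ (2 * i))) = 0" for x :: 'a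
      using fun_cong[OF assms(3), of x] by (simp add: lin_eval_def left_diff_distrib sum_subtractf)
    hence "a i - b i = 0"
      by (rule frob_poly_coeff_eq_0[where \<pi> = "\<lambda>i. 2 * i", rotated 3])
        (use True in \<open>auto simp: inj_on_def\<close>)
    thus ?thesis by simp
  qed (use assms(1,2) in \<open>simp add: coeff_vecs_def\<close>)
qed

lemma lin_coeffs_lin_eval: "a \<in> coeff_vecs n \<Longrightarrow> lin_coeffs q n (lin_eval q n a) = (a :: nat \<Rightarrow> 'a)"
  unfolding lin_coeffs_def by (rule the_equality) (auto intro: lin_eval_inj)

lemma lin_eval_two_terms:
  "lin_eval q n (\<lambda>i. (if i = m1 mod n then A else 0) + (if i = m2 mod n then B else 0))
     = (\<lambda>x :: 'a. A * x ^ (q ^ (2 * m1)) + B * x ^ (q ^ (2 * m2)))"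
proof
  fix x :: 'a
  have "lin_eval q n (\<lambda>i. (if i = m1 mod n then A else 0) + (if i = m2 mod n then B else 0)) x
      = (\<Sum>i<n. (if i = m1 mod n then A * x ^ (q ^ (2 * i)) else 0)
                + (if i = m2 mod n then B * x ^ (q ^ (2 * i)) else 0))"
    unfolding lin_eval_def by (intro sum.cong refl) (simp add: distrib_right)
  also have "\<dots> = A * x ^ (q ^ (2 * (m1 mod n))) + B * x ^ (q ^ (2 * (m2 mod n)))"
    using n_pos by (simp add: sum.distrib)
  finally show "lin_eval q n (\<lambda>i. (if i = m1 mod n then A else 0) + (if i = m2 mod n then B else 0)) x
      = A * x ^ (q ^ (2 * m1)) + B * x ^ (q ^ (2 * m2))"
    by (simp only: frob_double_mod)
qed

lemma card_span_q2_le: "finite S \<Longrightarrow> card (span_q2 q (S :: 'a set)) \<le> (q ^ 2) ^ card S"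
proof -
  assume "finite S"
  let ?comb = "\<lambda>c. \<Sum>s\<in>S. c s * s"
  have "span_q2 q S \<subseteq> ?comb ` (S \<rightarrow>\<^sub>E subfield_q2 q)"
  proof
    fix v assume "v \<in> span_q2 q S"
    then obtain c where "v = ?comb c" and "\<forall>s\<in>S. c s \<in> subfield_q2 q"
      unfolding span_q2_def by blast
    hence "v = ?comb (restrict c S)" and "restrict c S \<in> S \<rightarrow>\<^sub>E subfield_q2 q" by auto
    thus "v \<in> ?comb ` (S \<rightarrow>\<^sub>E subfield_q2 q)" by blast
  qed
  hence "card (span_q2 q S) \<le> card (?comb ` (S \<rightarrow>\<^sub>E (subfield_q2 q :: 'a set)))"
    by (intro card_mono) auto
  also have "\<dots> \<le> card (S \<rightarrow>\<^sub>E (subfield_q2 q :: 'a set))" by (rule card_image_le) simp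
  also have "\<dots> = card (subfield_q2 q :: 'a set) ^ card S" using \<open>finite S\<close> by (simp add: card_PiE)
  also have "\<dots> \<le> (q ^ 2) ^ card S"
    using card_fixed_points_power_le[OF one_less_q2, where ?'a = 'a]
    by (intro power_mono) (auto simp: subfield_q2_def)
  finally show ?thesis .
qed

lemma dim_q2_ge:
  assumes "(q ^ 2) ^ m \<le> card (V :: 'a set)"
  shows "m \<le> dim_q2 q V"
proof -
  let ?spans = "\<lambda>k. \<exists>S. finite S \<and> card S = k \<and> S \<subseteq> V \<and> V \<subseteq> span_q2 q S"
  have "V \<subseteq> span_q2 q V"
  proof
    fix v assume "v \<in> V"
    have "(\<Sum>s\<in>V. (if s = v then 1 else 0) * s) = (\<Sum>s\<in>V. if s = v then s else 0)"
      by (intro sum.cong) auto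
    hence "v = (\<Sum>s\<in>V. (if s = v then 1 else 0) * s)" using \<open>v \<in> V\<close> by simp
    moreover have "\<forall>s\<in>V. (if s = v then 1 else 0) \<in> subfield_q2 q"
      using q_ge_2 by (auto simp: subfield_q2_def)
    ultimately show "v \<in> span_q2 q V"
      unfolding span_q2_def by (intro CollectI exI[of _ "\<lambda>s. if s = v then 1 else 0"] conjI)
  qed
  hence "?spans (card V)" by auto
  hence "?spans (dim_q2 q V)" unfolding dim_q2_def by (rule LeastI)
  then obtain S where S: "finite S" "card S = dim_q2 q V" "V \<subseteq> span_q2 q S" by blast
  have "(q ^ 2) ^ m \<le> card (span_q2 q S)" using assms S(3) by (meson card_mono finite order.trans)
  also have "\<dots> \<le> (q ^ 2) ^ card S" by (rule card_span_q2_le[OF S(1)])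
  finally show ?thesis using S(2) one_less_q2 by simp
qed

lemma lin_rank_ge_of_card_kernel:
  assumes "card (lin_eval q n f -` {0}) \<le> (q ^ 2) ^ k" and "k \<le> n"
  shows "n - k \<le> lin_rank q n (f :: nat \<Rightarrow> 'a)"
proof -
  have "(q ^ 2) ^ k * (q ^ 2) ^ (n - k) = card (UNIV :: 'a set)"
    using assms(2) by (simp add: card_field power_mult flip: power_add)
  also have "\<dots> \<le> card (lin_eval q n f -` {0}) * card (range (lin_eval q n f))"
    by (rule card_UNIV_le_kernel_image) (rule lin_eval_add)
  also have "\<dots> \<le> (q ^ 2) ^ k * card (range (lin_eval q n f))"
    using assms(1) by simp
  finally have "(q ^ 2) ^ (n - k) \<le> card (range (lin_eval q n f))"
    using q_ge_2 by simp
  thus ?thesis unfolding lin_rank_def by (rule dim_q2_ge)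
qed

lemma rel_trace_two_terms_eq_0_imp:
  assumes "even u" and "odd v"
    and vanish: "\<And>\<beta> :: 'a. rel_trace q n (c1 * \<beta> ^ (q ^ u) + c2 * \<beta> ^ (q ^ v)) = 0"
  shows "c1 = 0" and "c2 = 0"
proof -
  let ?I = "{..<n} <+> {..<n}"
  define \<pi> where "\<pi> = case_sum (\<lambda>m. (u + 2 * m) mod (2 * n)) (\<lambda>m. (v + 2 * m) mod (2 * n))"
  define e where "e = case_sum (\<lambda>m. c1 ^ (q ^ (2 * m))) (\<lambda>m. c2 ^ (q ^ (2 * m)))"
  have expand: "(\<Sum>i\<in>?I. e i * \<beta> ^ (q ^ \<pi> i)) = 0" for \<beta> :: 'a
  proof -
    have "(\<Sum>i\<in>?I. e i * \<beta> ^ (q ^ \<pi> i))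
        = (\<Sum>m<n. c1 ^ (q ^ (2 * m)) * \<beta> ^ (q ^ (u + 2 * m)) + c2 ^ (q ^ (2 * m)) * \<beta> ^ (q ^ (v + 2 * m)))"
      by (simp add: sum.Plus sum.distrib e_def \<pi>_def flip: frob_mod)
    also have "\<dots> = rel_trace q n (c1 * \<beta> ^ (q ^ u) + c2 * \<beta> ^ (q ^ v))"
      by (simp add: rel_trace_def frob_add power_mult_distrib frob_frob add.commute)
    finally show ?thesis using vanish by simp
  qed
  have even_mod: "even (x mod (2 * n)) \<longleftrightarrow> even x" for x :: nat
    by (simp add: even_iff_mod_2_eq_zero mod_mod_cancel)
  have cancel: "a = b" if "(w + 2 * a) mod (2 * n) = (w + 2 * b) mod (2 * n)" "a < n" "b < n" for w a b :: nat
  proof -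
    have "[2 * a = 2 * b] (mod 2 * n)" using that(1) by (simp add: cong_def cong_add_lcancel_nat flip: cong_def)
    hence "2 * a = 2 * b" using that(2,3) by (intro cong_less_modulus_unique_nat) auto
    thus ?thesis by simp
  qed
  \<comment> \<open>the exponents u + 2m are the even residues mod 2n, the exponents v + 2m the odd ones\<close>
  have parity: "(u + 2 * a) mod (2 * n) \<noteq> (v + 2 * b) mod (2 * n)" for a b
    using assms(1,2) even_mod[of "u + 2 * a"] even_mod[of "v + 2 * b"] by auto
  have "inj_on \<pi> ?I"
    by (auto simp: inj_on_def \<pi>_def parity parity[THEN not_sym] dest: cancel)
  moreover have "\<pi> i < 2 * n" for i using n_pos by (simp add: \<pi>_def split: sum.split)
  ultimately have "e i = 0" if "i \<in> ?I" for i
    by (intro frob_poly_coeff_eq_0[OF _ _ _ expand that]) auto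
  moreover have "Inl 0 \<in> ?I" and "Inr 0 \<in> ?I" using n_pos by auto
  ultimately show "c1 = 0" and "c2 = 0" by (force simp: e_def)+
qed

lemma dual_code_coeffs_vanish:
  assumes f: "f \<in> dual_code q n C" and "odd v"
    and mem: "\<And>\<beta> :: 'a. (\<lambda>x. (\<beta> * x) ^ (q ^ (2 * k)) + \<beta> ^ (q ^ v) * x ^ (q ^ (2 * l))) \<in> C"
  shows "f (k mod n) = 0" and "f (l mod n) = 0"
proof -
  have trace_0: "rel_trace q n (f (k mod n) * \<beta> ^ (q ^ (2 * k)) + f (l mod n) * \<beta> ^ (q ^ v)) = 0"
    for \<beta>
  proof -
    define a where "a = (\<lambda>i. (if i = k mod n then \<beta> ^ (q ^ (2 * k)) else 0)
      + (if i = l mod n then \<beta> ^ (q ^ v) else 0))"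
    have "a i = 0" if "n \<le> i" for i
    proof -
      have "i \<noteq> k mod n" and "i \<noteq> l mod n" using that n_pos by (metis mod_less_divisor not_le)+
      thus ?thesis by (simp add: a_def)
    qed
    hence a_vec: "a \<in> coeff_vecs n" by (simp add: coeff_vecs_def)
    have "lin_eval q n a = (\<lambda>x. (\<beta> * x) ^ (q ^ (2 * k)) + \<beta> ^ (q ^ v) * x ^ (q ^ (2 * l)))"
      by (simp add: a_def lin_eval_two_terms power_mult_distrib)
    hence "pairing q n f (lin_coeffs q n (lin_eval q n a)) = 0"
      using f mem[of \<beta>] unfolding dual_code_def by simp
    hence pairing_0: "pairing q n f a = 0" by (simp only: lin_coeffs_lin_eval[OF a_vec])
    have "(\<Sum>i<n. f i * a i) = (\<Sum>i<n. (if i = k mod n then f i * \<beta> ^ (q ^ (2 * k)) else 0)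
        + (if i = l mod n then f i * \<beta> ^ (q ^ v) else 0))"
      by (intro sum.cong refl) (simp add: a_def distrib_left)
    also have "\<dots> = f (k mod n) * \<beta> ^ (q ^ (2 * k)) + f (l mod n) * \<beta> ^ (q ^ v)"
      using n_pos by (simp add: sum.distrib)
    finally show ?thesis using pairing_0 by (simp add: pairing_def)
  qed
  have "even (2 * k)" by simp
  from rel_trace_two_terms_eq_0_imp[OF this \<open>odd v\<close> trace_0]
  show "f (k mod n) = 0" and "f (l mod n) = 0" .
qed

lemma H_code_memI:
  assumes "1 \<le> j" and "j \<le> (n - d + 1) div 2"
  shows "(\<lambda>x :: 'a. (\<beta> * x) ^ (q ^ (2 * s * (n - j + 1))) + \<beta> ^ (q ^ s) * x ^ (q ^ (2 * s * j)))
    \<in> H_code q n d s"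
proof -
  define b where "b i = (if i = j then \<beta> else 0)" for i
  have "(\<Sum>i\<in>{1..(n - d + 1) div 2}.
          (b i * x) ^ (q ^ (2 * s * (n - i + 1))) + b i ^ (q ^ s) * x ^ (q ^ (2 * s * i)))
      = (\<beta> * x) ^ (q ^ (2 * s * (n - j + 1))) + \<beta> ^ (q ^ s) * x ^ (q ^ (2 * s * j))" for x :: 'a
    using assms by (subst sum.mono_neutral_right[where S = "{j}"]) (auto simp: b_def)
  thus ?thesis unfolding H_code_def by (intro CollectI exI[of _ b] conjI TrueI ext) (rule sym)
qed

lemma E_code_memI_center:
  "(\<lambda>x :: 'a. (\<beta> * x) ^ (q ^ (s * (n + 1))) + \<beta> ^ (q ^ (n + s * (n + 1))) * x ^ (q ^ (s * (n + 1))))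
    \<in> E_code q n d s"
proof -
  \<comment> \<open>b0 must lie in F_{q^n}; with this choice (b0 x)^(q^(s(n+1))) splits into two monomials\<close>
  define b0 where "b0 = \<beta> + \<beta> ^ (q ^ n)"
  have "b0 ^ (q ^ n) = \<beta> ^ (q ^ n) + \<beta> ^ (q ^ (2 * n * 1))"
    by (simp add: b0_def frob_add frob_frob mult_2)
  hence "b0 ^ (q ^ n) = b0" by (simp only: frob_period b0_def add.commute)
  moreover have "(\<lambda>x :: 'a. (b0 * x) ^ (q ^ (s * (n + 1))) + (\<Sum>j\<in>{1..(n - d) div 2}.
        (0 * x) ^ (q ^ (s * (n + 2 * j + 1))) + 0 ^ (q ^ s) * x ^ (q ^ (s * (n - 2 * j + 1)))))
      = (\<lambda>x. (\<beta> * x) ^ (q ^ (s * (n + 1))) + \<beta> ^ (q ^ (n + s * (n + 1))) * x ^ (q ^ (s * (n + 1))))"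
    by (simp add: b0_def frob_add power_mult_distrib frob_frob distrib_right)
  ultimately show ?thesis
    unfolding E_code_def by (intro CollectI exI[of _ b0] exI[of _ "\<lambda>_. 0"] conjI) (rule sym)
qed

lemma E_code_memI:
  assumes "1 \<le> j" and "j \<le> (n - d) div 2"
  shows "(\<lambda>x :: 'a. (\<beta> * x) ^ (q ^ (s * (n + 2 * j + 1))) + \<beta> ^ (q ^ s) * x ^ (q ^ (s * (n - 2 * j + 1))))
    \<in> E_code q n d s"
proof -
  define b where "b i = (if i = j then \<beta> else 0)" for i
  have "(0 * x) ^ (q ^ (s * (n + 1))) + (\<Sum>i\<in>{1..(n - d) div 2}.
          (b i * x) ^ (q ^ (s * (n + 2 * i + 1))) + b i ^ (q ^ s) * x ^ (q ^ (s * (n - 2 * i + 1))))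
      = (\<beta> * x) ^ (q ^ (s * (n + 2 * j + 1))) + \<beta> ^ (q ^ s) * x ^ (q ^ (s * (n - 2 * j + 1)))"
    for x :: 'a
    using assms by (subst sum.mono_neutral_right[where S = "{j}"]) (auto simp: b_def)
  thus ?thesis
    unfolding E_code_def by (intro CollectI exI[of _ 0] exI[of _ b] conjI frob_zero ext) (rule sym)
qed

end

locale frobenius_generator = field_q2n +
  fixes s :: nat
  assumes coprime_s_n: "coprime s n" and s_pos: "0 < s"
begin

lemma fixed_by_frob_generator:
  assumes "(x :: 'a) ^ (q ^ (2 * s)) = x"
  shows "x ^ (q ^ 2) = x"
proof -
  have iterate: "x ^ (q ^ (2 * s * j)) = x" for j
  proof (induction j)
    case (Suc j)
    have "x ^ (q ^ (2 * s * Suc j)) = (x ^ (q ^ (2 * s * j))) ^ (q ^ (2 * s))"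
      by (simp add: frob_frob algebra_simps)
    thus ?case using Suc.IH assms by simp
  qed simp
  obtain a b where "s * a = n * b + gcd s n" using bezout_nat[of s n] s_pos by auto
  hence "2 * s * a = 2 * n * b + 2" using coprime_s_n by simp
  hence "x = (x ^ (q ^ (2 * n * b))) ^ (q ^ 2)" using iterate[of a] by (simp add: frob_frob)
  thus ?thesis by (simp only: frob_period)
qed

lemma card_frob_generator_fiber: "card ((\<lambda>y :: 'a. y ^ (q ^ (2 * s)) - y) -` {z}) \<le> q ^ 2"
proof -
  have "card ((\<lambda>y :: 'a. y ^ (q ^ (2 * s)) - y) -` {z}) \<le> card ((\<lambda>y :: 'a. y ^ (q ^ (2 * s)) - y) -` {0})"
    by (rule card_fiber_le_card_kernel) (simp add: frob_add)
  also have "\<dots> \<le> card {x :: 'a. x ^ (q ^ 2) = x}"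
    by (rule card_mono) (auto intro: fixed_by_frob_generator)
  also have "\<dots> \<le> q ^ 2" by (rule card_fixed_points_power_le[OF one_less_q2])
  finally show ?thesis .
qed

lemma frob_generator_telescope:
  "(y :: 'a) ^ (q ^ (2 * s * l)) - y = (\<Sum>m<l. (y ^ (q ^ (2 * s)) - y) ^ (q ^ (2 * s * m)))"
proof (induction l)
  case (Suc l)
  have "y ^ (q ^ (2 * s * Suc l)) - y
      = (y ^ (q ^ (2 * s * l)) - y) + (y ^ (q ^ (2 * s * Suc l)) - y ^ (q ^ (2 * s * l)))"
    by simp
  also have "y ^ (q ^ (2 * s * Suc l)) - y ^ (q ^ (2 * s * l)) = (y ^ (q ^ (2 * s)) - y) ^ (q ^ (2 * s * l))"
    by (simp add: frob_diff frob_frob algebra_simps)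
  finally show ?case using Suc.IH by simp
qed simp

lemma sigma_poly_factor:
  assumes "(\<Sum>l\<le>Suc k. b l) = 0"
  shows "(\<Sum>l\<le>Suc k. b l * (y :: 'a) ^ (q ^ (2 * s * l)))
       = (\<Sum>m\<le>k. (\<Sum>l\<in>{Suc m..Suc k}. b l) * (y ^ (q ^ (2 * s)) - y) ^ (q ^ (2 * s * m)))"
proof -
  let ?w = "\<lambda>m. (y ^ (q ^ (2 * s)) - y) ^ (q ^ (2 * s * m))"
  have "(\<Sum>l\<le>Suc k. b l * y ^ (q ^ (2 * s * l)))
      = (\<Sum>l\<le>Suc k. b l * y ^ (q ^ (2 * s * l))) - (\<Sum>l\<le>Suc k. b l) * y"
    using assms by simp
  also have "\<dots> = (\<Sum>l\<le>Suc k. b l * (y ^ (q ^ (2 * s * l)) - y))"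
    unfolding right_diff_distrib sum_subtractf sum_distrib_right ..
  also have "\<dots> = (\<Sum>l\<le>Suc k. b l * (\<Sum>m<l. ?w m))"
    by (simp only: frob_generator_telescope)
  also have "\<dots> = (\<Sum>m<Suc k. (\<Sum>l\<in>{Suc m..Suc k}. b l) * ?w m)"
    by (simp only: sum_distrib_left sum_distrib_right sum.nested_swap')
  finally show ?thesis by (simp add: lessThan_Suc_atMost)
qed

lemma card_sigma_poly_kernel:
  "c k \<noteq> 0 \<Longrightarrow> card ((\<lambda>y :: 'a. \<Sum>l\<le>k. c l * y ^ (q ^ (2 * s * l))) -` {0}) \<le> (q ^ 2) ^ k"
proof (induction k arbitrary: c)
  case 0
  have "(\<lambda>y :: 'a. \<Sum>l\<le>0. c l * y ^ (q ^ (2 * s * l))) -` {0} = {0}" using 0 by auto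
  thus ?case by simp
next
  case (Suc k)
  let ?K = "(\<lambda>y :: 'a. \<Sum>l\<le>Suc k. c l * y ^ (q ^ (2 * s * l))) -` {0}"
  show ?case
  proof (cases "?K \<subseteq> {0}")
    case True
    hence "card ?K \<le> 1" using card_mono[of "{0 :: 'a}" ?K] by simp
    moreover have "1 \<le> (q ^ 2) ^ Suc k" using q_ge_2 by simp
    ultimately show ?thesis by linarith
  next
    case False
    \<comment> \<open>rescaling by a nonzero root u makes the coefficients sum to 0, so the polynomial factors
      through y \<mapsto> \<sigma>(y) - y, whose fibres have at most q^2 elements\<close>
    then obtain u where u: "u \<in> ?K" "u \<noteq> 0" by auto
    define b where "b l = c l * u ^ (q ^ (2 * s * l))" for l
    define c' where "c' m = (\<Sum>l\<in>{Suc m..Suc k}. b l)" for m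
    let ?h = "\<lambda>y :: 'a. \<Sum>l\<le>Suc k. b l * y ^ (q ^ (2 * s * l))"
    let ?g = "\<lambda>z :: 'a. \<Sum>m\<le>k. c' m * z ^ (q ^ (2 * s * m))"
    have "c' k \<noteq> 0" using Suc.prems u(2) by (simp add: c'_def b_def)
    have h_eq: "?h y = ?g (y ^ (q ^ (2 * s)) - y)" for y
      unfolding c'_def by (rule sigma_poly_factor) (use u(1) in \<open>simp add: b_def\<close>)
    have "?h = (\<lambda>y. \<Sum>l\<le>Suc k. c l * (u * y) ^ (q ^ (2 * s * l)))"
      by (rule ext) (simp add: b_def power_mult_distrib mult.assoc)
    hence "card ?K = card (?h -` {0})"
      using card_vimage_scale[OF u(2), of "\<lambda>y. \<Sum>l\<le>Suc k. c l * y ^ (q ^ (2 * s * l))"] by simp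
    also have "?h -` {0} = (\<lambda>y. y ^ (q ^ (2 * s)) - y) -` (?g -` {0})"
      by (intro set_eqI) (simp only: vimage_eq h_eq)
    also have "card \<dots> \<le> card (?g -` {0}) * q ^ 2"
      by (intro card_vimage_le card_frob_generator_fiber) simp
    also have "\<dots> \<le> (q ^ 2) ^ k * q ^ 2" using Suc.IH[of c', OF \<open>c' k \<noteq> 0\<close>] by simp
    finally show ?thesis by (simp add: mult.commute)
  qed
qed

lemma card_sigma_poly_kernel_lessThan:
  assumes "\<exists>l<L. c l \<noteq> 0"
  shows "card ((\<lambda>y :: 'a. \<Sum>l<L. c l * y ^ (q ^ (2 * s * l))) -` {0}) \<le> (q ^ 2) ^ (L - 1)"
proof -
  define k where "k = Max {l. l < L \<and> c l \<noteq> 0}"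
  have k: "k < L" "c k \<noteq> 0" and above_k: "\<And>l. k < l \<Longrightarrow> l < L \<Longrightarrow> c l = 0"
    using assms Max_in[of "{l. l < L \<and> c l \<noteq> 0}"] Max_ge[of "{l. l < L \<and> c l \<noteq> 0}"]
    by (fastforce simp: k_def)+
  have "(\<Sum>l<L. c l * y ^ (q ^ (2 * s * l))) = (\<Sum>l\<le>k. c l * y ^ (q ^ (2 * s * l)))" for y :: 'a
    by (rule sum.mono_neutral_right) (use k above_k in auto)
  hence "card ((\<lambda>y :: 'a. \<Sum>l<L. c l * y ^ (q ^ (2 * s * l))) -` {0}) \<le> (q ^ 2) ^ k"
    using card_sigma_poly_kernel[of c k, OF k(2)] by simp
  also have "\<dots> \<le> (q ^ 2) ^ (L - 1)" using k(1) one_less_q2 by (intro power_increasing) auto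
  finally show ?thesis .
qed

lemma lin_eval_eq_sigma_poly:
  assumes "\<And>i. i < n \<Longrightarrow> f i \<noteq> 0 \<Longrightarrow> \<exists>l<L. i = (s * (w + l)) mod n" and "L \<le> n"
  shows "lin_eval q n (f :: nat \<Rightarrow> 'a) x
       = (\<Sum>l<L. f ((s * (w + l)) mod n) * (x ^ (q ^ (2 * s * w))) ^ (q ^ (2 * s * l)))"
proof -
  define h where "h l = (s * (w + l)) mod n" for l
  have "inj_on h {..<L}"
  proof (rule inj_onI)
    fix l l' assume "l \<in> {..<L}" "l' \<in> {..<L}" "h l = h l'"
    hence "[s * (w + l) = s * (w + l')] (mod n)" by (simp add: h_def cong_def)
    hence "[l = l'] (mod n)" using coprime_s_n by (simp add: cong_mult_lcancel_nat cong_add_lcancel_nat)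
    thus "l = l'" using \<open>l \<in> {..<L}\<close> \<open>l' \<in> {..<L}\<close> assms(2) by (auto intro: cong_less_modulus_unique_nat)
  qed
  have "lin_eval q n f x = (\<Sum>i\<in>h ` {..<L}. f i * x ^ (q ^ (2 * i)))"
    unfolding lin_eval_def
    by (rule sum.mono_neutral_right) (use assms(1) n_pos in \<open>auto simp: h_def\<close>)
  also have "\<dots> = (\<Sum>l<L. f (h l) * x ^ (q ^ (2 * h l)))"
    by (simp add: sum.reindex[OF \<open>inj_on h {..<L}\<close>])
  also have "\<dots> = (\<Sum>l<L. f (h l) * (x ^ (q ^ (2 * s * w))) ^ (q ^ (2 * s * l)))"
  proof (intro sum.cong refl)
    fix l
    have "x ^ (q ^ (2 * h l)) = x ^ (q ^ (2 * (s * (w + l))))" unfolding h_def by (rule frob_double_mod)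
    also have "2 * (s * (w + l)) = 2 * s * w + 2 * s * l" by (simp add: algebra_simps)
    finally show "f (h l) * x ^ (q ^ (2 * h l)) = f (h l) * (x ^ (q ^ (2 * s * w))) ^ (q ^ (2 * s * l))"
      by (simp only: frob_frob)
  qed
  finally show ?thesis by (simp add: h_def)
qed

lemma lin_rank_ge_of_support:
  assumes "f \<in> coeff_vecs n" and "f \<noteq> (\<lambda>_. 0)" and "L \<le> n"
    and support: "\<And>i. i < n \<Longrightarrow> f i \<noteq> 0 \<Longrightarrow> \<exists>l<L. i = (s * (w + l)) mod n"
  shows "n - L + 1 \<le> lin_rank q n (f :: nat \<Rightarrow> 'a)"
proof -
  let ?P = "\<lambda>y :: 'a. \<Sum>l<L. f ((s * (w + l)) mod n) * y ^ (q ^ (2 * s * l))"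
  obtain i where "f i \<noteq> 0" using assms(2) by auto
  moreover have "i < n" using \<open>f i \<noteq> 0\<close> assms(1) by (auto simp: coeff_vecs_def not_less[symmetric])
  ultimately have "\<exists>l<L. f ((s * (w + l)) mod n) \<noteq> 0" using support by blast
  hence kernel_P: "card (?P -` {0}) \<le> (q ^ 2) ^ (L - 1)" and "1 \<le> L"
    by (rule card_sigma_poly_kernel_lessThan, auto)
  have "lin_eval q n f = ?P \<circ> (\<lambda>x. x ^ (q ^ (2 * s * w)))"
    using lin_eval_eq_sigma_poly[OF support \<open>L \<le> n\<close>] by (simp add: fun_eq_iff)
  hence "card (lin_eval q n f -` {0}) \<le> card (?P -` {0})"
    by (intro card_inj_on_le[where f = "\<lambda>x. x ^ (q ^ (2 * s * w))"] inj_on_subset[OF inj_frob]) auto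
  also have "\<dots> \<le> (q ^ 2) ^ (L - 1)" by (fact kernel_P)
  finally have "n - (L - 1) \<le> lin_rank q n f"
    using \<open>L \<le> n\<close> by (intro lin_rank_ge_of_card_kernel) auto
  moreover have "n - (L - 1) = n - L + 1" using \<open>1 \<le> L\<close> \<open>L \<le> n\<close> by simp
  ultimately show ?thesis by simp
qed

lemma support_of_zero_window:
  assumes "a \<le> n" and "Z \<le> n"
    and zero: "\<And>t. a \<le> t \<Longrightarrow> t < a + Z \<Longrightarrow> f ((s * t) mod n) = 0"
    and "i < n" and "f i \<noteq> 0"
  shows "\<exists>l<n - Z. i = (s * (a + Z + l)) mod n"
proof -
  obtain u v where "s * u = n * v + gcd s n" using bezout_nat[of s n] s_pos by auto
  hence uv: "s * u = n * v + 1" using coprime_s_n by simp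
  define t where "t = (u * i) mod n"
  have "(s * t) mod n = (s * u * i) mod n" by (simp add: t_def mod_mult_right_eq mult.assoc)
  also have "s * u * i = i + n * (v * i)" using uv by (simp add: algebra_simps)
  finally have "(s * t) mod n = i" using \<open>i < n\<close> by simp
  define t' where "t' = (if a \<le> t then t else t + n)"
  have "(s * t') mod n = i"
    using \<open>(s * t) mod n = i\<close> by (simp add: t'_def distrib_left mult.commute[of s n])
  moreover have "a \<le> t'" and "t' < a + n"
    using \<open>a \<le> n\<close> mod_less_divisor[OF n_pos, of "u * i"] by (auto simp: t'_def t_def)
  moreover have "\<not> t' < a + Z" using zero[of t'] \<open>f i \<noteq> 0\<close> \<open>a \<le> t'\<close> \<open>(s * t') mod n = i\<close> by auto
  ultimately show ?thesis by (intro exI[of _ "t' - (a + Z)"]) auto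
qed

lemma is_design_of_zero_window:
  assumes "a \<le> n" and "Z \<le> n"
    and zero: "\<And>f t. f \<in> dual_code q n C \<Longrightarrow> a \<le> t \<Longrightarrow> t < a + Z \<Longrightarrow> f ((s * t) mod n) = 0"
  shows "is_design q n (C :: ('a \<Rightarrow> 'a) set) Z"
  unfolding is_design_def
proof (intro ballI impI)
  fix f assume f: "f \<in> dual_code q n C" and "f \<noteq> (\<lambda>_. 0)"
  have "f \<in> coeff_vecs n" using f by (simp add: dual_code_def herm_set_def)
  have "\<exists>l<n - Z. i = (s * (a + Z + l)) mod n" if "i < n" "f i \<noteq> 0" for i
    using support_of_zero_window[where f = f, OF assms(1,2) zero[OF f] that] .
  hence "n - (n - Z) + 1 \<le> lin_rank q n f"
    by (intro lin_rank_ge_of_support[OF \<open>f \<in> coeff_vecs n\<close> \<open>f \<noteq> (\<lambda>_. 0)\<close>]) auto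
  thus "lin_rank q n f \<notin> {1..Z}" using \<open>Z \<le> n\<close> by auto
qed

lemma H_code_dual_coeff_eq_0:
  assumes "odd s" and "f \<in> dual_code q n (H_code q n d s)"
    and "n + 1 - (n - d + 1) div 2 \<le> t" and "t \<le> n + (n - d + 1) div 2"
  shows "f ((s * t) mod n) = (0 :: 'a)"
proof -
  have vanish: "f ((s * (n - j + 1)) mod n) = 0 \<and> f ((s * j) mod n) = 0"
    if "1 \<le> j" "j \<le> (n - d + 1) div 2" for j
  proof -
    have "(\<lambda>x :: 'a. (\<beta> * x) ^ (q ^ (2 * (s * (n - j + 1)))) + \<beta> ^ (q ^ s) * x ^ (q ^ (2 * (s * j))))
        \<in> H_code q n d s" for \<beta>
      using H_code_memI[OF that, of \<beta>] by (simp add: mult.assoc)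
    from dual_code_coeffs_vanish[OF assms(2) \<open>odd s\<close> this] show ?thesis by simp
  qed
  show ?thesis
  proof (cases "t \<le> n")
    case True
    with assms(3,4) vanish[of "n + 1 - t"] show ?thesis by simp
  next
    case False
    have "(s * t) mod n = (s * (t - n) + n * s) mod n" using False by (simp add: algebra_simps)
    with assms(3,4) vanish[of "t - n"] False show ?thesis by simp
  qed
qed

lemma H_code_is_design:
  assumes "odd s" and "odd (n + d)" and "1 \<le> d" and "d \<le> n - 1"
  shows "is_design q n (H_code q n d s :: ('a \<Rightarrow> 'a) set) (n - d + 1)"
proof -
  define J where "J = (n - d + 1) div 2"
  have J: "2 * J = n - d + 1" "1 \<le> J" using assms(2-4) unfolding J_def by presburger+
  show ?thesis
  proof (rule is_design_of_zero_window[where a = "n + 1 - J"])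
    fix f :: "nat \<Rightarrow> 'a" and t
    assume f: "f \<in> dual_code q n (H_code q n d s)" and t: "n + 1 - J \<le> t" "t < n + 1 - J + (n - d + 1)"
    show "f ((s * t) mod n) = 0"
    proof (rule H_code_dual_coeff_eq_0[OF \<open>odd s\<close> f])
      show "n + 1 - (n - d + 1) div 2 \<le> t" using t(1) unfolding J_def .
      have "t \<le> n + J" using t(2) J by linarith
      thus "t \<le> n + (n - d + 1) div 2" unfolding J_def .
    qed
  qed (use J assms(3,4) in auto)
qed

lemma E_code_dual_coeff_eq_0:
  assumes "odd s" and "odd n" and "f \<in> dual_code q n (E_code q n d s)"
    and "(n + 1) div 2 - (n - d) div 2 \<le> t" and "t \<le> (n + 1) div 2 + (n - d) div 2"
  shows "f ((s * t) mod n) = (0 :: 'a)"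
proof -
  define c where "c = (n + 1) div 2"
  define J where "J = (n - d) div 2"
  have c: "2 * c = n + 1" and J: "2 * J \<le> n" using assms(2) unfolding c_def J_def by presburger+
  have center: "f ((s * c) mod n) = 0"
  proof -
    have "s * (n + 1) = 2 * (s * c)" using c by (metis mult.left_commute)
    from E_code_memI_center[where d = d and s = s, unfolded this]
    have "(\<lambda>x :: 'a. (\<beta> * x) ^ (q ^ (2 * (s * c))) + \<beta> ^ (q ^ (n + 2 * (s * c))) * x ^ (q ^ (2 * (s * c))))
        \<in> E_code q n d s" for \<beta> .
    moreover have "odd (n + 2 * (s * c))" using assms(2) by simp
    ultimately show ?thesis using dual_code_coeffs_vanish(1)[OF assms(3)] by blast
  qed
  have off_center: "f ((s * (c + j)) mod n) = 0 \<and> f ((s * (c - j)) mod n) = 0" if "1 \<le> j" "j \<le> J" for j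
  proof -
    have "n + 2 * j + 1 = 2 * (c + j)" and "n - 2 * j + 1 = 2 * (c - j)" using c J that by simp_all
    hence "s * (n + 2 * j + 1) = 2 * (s * (c + j))" and "s * (n - 2 * j + 1) = 2 * (s * (c - j))"
      by (metis mult.left_commute)+
    from E_code_memI[where s = s, OF that[unfolded J_def], unfolded this]
    have "(\<lambda>x :: 'a. (\<beta> * x) ^ (q ^ (2 * (s * (c + j)))) + \<beta> ^ (q ^ s) * x ^ (q ^ (2 * (s * (c - j)))))
        \<in> E_code q n d s" for \<beta> .
    from dual_code_coeffs_vanish[OF assms(3) \<open>odd s\<close> this] show ?thesis by simp
  qed
  consider "t = c" | "c < t" | "t < c" by linarith
  then show ?thesis
  proof cases
    case 1
    with center show ?thesis by simp
  next
    case 2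
    hence "1 \<le> t - c" and "t - c \<le> J" using assms(5) by (simp_all add: c_def J_def)
    with off_center[of "t - c"] 2 show ?thesis by simp
  next
    case 3
    hence "1 \<le> c - t" and "c - t \<le> J" using assms(4) by (simp_all add: c_def J_def)
    with off_center[of "c - t"] 3 show ?thesis by simp
  qed
qed

lemma E_code_is_design:
  assumes "odd s" and "odd n" and "odd d" and "1 \<le> d" and "d \<le> n - 1"
  shows "is_design q n (E_code q n d s :: ('a \<Rightarrow> 'a) set) (n - d + 1)"
proof -
  define c where "c = (n + 1) div 2"
  define J where "J = (n - d) div 2"
  have c: "2 * c = n + 1" and J: "2 * J = n - d" using assms(2-5) unfolding c_def J_def by presburger+
  show ?thesis
  proof (rule is_design_of_zero_window[where a = "c - J"])
    fix f :: "nat \<Rightarrow> 'a" and t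
    assume f: "f \<in> dual_code q n (E_code q n d s)" and t: "c - J \<le> t" "t < c - J + (n - d + 1)"
    show "f ((s * t) mod n) = 0"
    proof (rule E_code_dual_coeff_eq_0[OF \<open>odd s\<close> \<open>odd n\<close> f])
      show "(n + 1) div 2 - (n - d) div 2 \<le> t" using t(1) unfolding c_def J_def .
      have "t \<le> c + J" using t(2) c J by linarith
      thus "t \<le> (n + 1) div 2 + (n - d) div 2" unfolding c_def J_def .
    qed
  qed (use c J assms(4,5) in auto)
qed

end

theorem theorem5p3:
  fixes q n d s :: nat
  assumes "prime_power q"
    and "card (UNIV :: 'a::{field,finite} set) = q ^ (2 * n)"
    and "n \<ge> 2"
    and "odd s" and "s > 0" and "coprime s n"
    and "1 \<le> d" and "d \<le> n - 1"
  shows "(odd (n + d) \<longrightarrow> is_design q n (H_code q n d s :: ('a \<Rightarrow> 'a) set) (n - d + 1))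
       \<and> (odd n \<and> odd d \<longrightarrow> is_design q n (E_code q n d s :: ('a \<Rightarrow> 'a) set) (n - d + 1))"
proof -
  interpret frobenius_generator q n "TYPE('a)" s
    using assms(1,2,5,6) by unfold_locales
  show ?thesis
    using H_code_is_design E_code_is_design assms(4,7,8) by blast
qed

end
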